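(* Let $G$ be a group and let $H, K \leq G$ be commensurable subgroups. Then there is a geodesic in $\mathcal{C}(G)$ from $H$ to $K$ whose vertices are $H$, $H\cap K$, and $K$. Hence the distance between $H$ and $K$ in $\mathcal{C}(G)$ is $c(H,K)$, and the edge $(H,K)$ is a geodesic.
   Context: For subgroups $A,B$ of $G$, $c(A,B) = [A:A\cap B][B:A\cap B]$; $A$ and $B$ are commensurable if $c(A,B)<\infty$. The commensurability graph $\mathcal{C}(G)$ is the weighted graph whose vertices are all subgroups of $G$, with an edge between $A$ and $B$ if and only if $A\cap B$ has finite index in both $A$ and $B$, this edge having weight $c(A,B)$. The length of a path is the product of its edge weights; $\mathcal{C}(G)$ is given the path metric, the distance between two vertices being the minimal length of a path joining them, and a geodesic is a path of minimal length between its endpoints. *)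

theory Defs
  imports "HOL-Algebra.Algebra"
begin

definition rel_cosets :: "('a, 'b) monoid_scheme \<Rightarrow> 'a set \<Rightarrow> 'a set \<Rightarrow> 'a set set" where
  "rel_cosets G A B = {(A \<inter> B) #>\<^bsub>G\<^esub> a | a. a \<in> A}"

definition rel_index :: "('a, 'b) monoid_scheme \<Rightarrow> 'a set \<Rightarrow> 'a set \<Rightarrow> nat" where
  "rel_index G A B = card (rel_cosets G A B)"

definition commensurable :: "('a, 'b) monoid_scheme \<Rightarrow> 'a set \<Rightarrow> 'a set \<Rightarrow> bool" where
  "commensurable G A B \<longleftrightarrow> finite (rel_cosets G A B) \<and> finite (rel_cosets G B A)"

text \<open>c(A,B) = [A : A \<inter> B][B : A \<inter> B] (meaningful when A, B commensurable).\<close>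
definition cweight :: "('a, 'b) monoid_scheme \<Rightarrow> 'a set \<Rightarrow> 'a set \<Rightarrow> nat" where
  "cweight G A B = rel_index G A B * rel_index G B A"

definition comm_path :: "('a, 'b) monoid_scheme \<Rightarrow> 'a set list \<Rightarrow> bool" where
  "comm_path G p \<longleftrightarrow> p \<noteq> [] \<and> (\<forall>A\<in>set p. subgroup A G) \<and>
     (\<forall>i < length p - 1. commensurable G (p ! i) (p ! Suc i))"

definition path_length :: "('a, 'b) monoid_scheme \<Rightarrow> 'a set list \<Rightarrow> nat" where
  "path_length G p = (\<Prod>i < length p - 1. cweight G (p ! i) (p ! Suc i))"

definition comm_dist :: "('a, 'b) monoid_scheme \<Rightarrow> 'a set \<Rightarrow> 'a set \<Rightarrow> nat" where
  "comm_dist G A B = Inf {path_length G p | p. comm_path G p \<and> hd p = A \<and> last p = B}"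

definition comm_geodesic :: "('a, 'b) monoid_scheme \<Rightarrow> 'a set list \<Rightarrow> bool" where
  "comm_geodesic G p \<longleftrightarrow> comm_path G p \<and>
     (\<forall>q. comm_path G q \<and> hd q = hd p \<and> last q = last p \<longrightarrow> path_length G p \<le> path_length G q)"

end

(* The weight c is submultiplicative: c(A,C) <= c(A,B) c(B,C). This rests on
   [A : A \<inter> C] <= [A : A \<inter> B] [A \<inter> B : A \<inter> B \<inter> C] <= [A : A \<inter> B] [B : B \<inter> C].
   For the first inequality write a \<in> A as k s r, where r represents the coset of a modulo
   A \<inter> B, s \<in> A \<inter> B represents the coset of a r\<inverse> modulo A \<inter> B \<inter> C, and k \<in> A \<inter> C;
   so (A \<inter> C) a depends only on these two cosets. For the second, intersecting with A \<inter> B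
   maps the cosets of B \<inter> C in B onto those of A \<inter> B \<inter> C in A \<inter> B. By induction every path
   from H to K has length at least c(H,K), while both [H, K] and [H, H \<inter> K, K] have length
   exactly c(H,K), the second because H \<inter> K has index 1 in itself. *)

theory Submission
  imports Defs
begin

lemma (in group) rcos_mult_absorb:
  assumes "subgroup H G" "k \<in> H" "x \<in> carrier G"
  shows "H #> (k \<otimes> x) = H #> x"
proof -
  have "H #> (k \<otimes> x) = (H #> k) #> x"
    using assms by (simp add: coset_mult_assoc subgroup.subset subgroup.mem_carrier)
  also have "H #> k = H"
    using assms(1,2) by (rule subgroup.rcos_const[OF _ is_group])
  finally show ?thesis .
qed

lemma (in group) rcos_some_decomp:
  assumes "subgroup H G" "x \<in> carrier G"
  shows "\<exists>h\<in>H. x = h \<otimes> (SOME y. y \<in> H #> x)"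
proof -
  have "(SOME y. y \<in> H #> x) \<in> H #> x"
    using rcos_self[OF assms(2,1)] by (rule someI)
  then have "H #> x = H #> (SOME y. y \<in> H #> x)"
    using assms by (intro repr_independence)
  then have "x \<in> H #> (SOME y. y \<in> H #> x)"
    using rcos_self[OF assms(2,1)] by simp
  then show ?thesis
    unfolding r_coset_def by blast
qed

lemma (in group) rcos_Int_subgroup:
  assumes "subgroup A G" "C \<subseteq> carrier G" "x \<in> A"
  shows "(C #> x) \<inter> A = (A \<inter> C) #> x"
proof
  show "(C #> x) \<inter> A \<subseteq> (A \<inter> C) #> x"
  proof
    fix z assume "z \<in> (C #> x) \<inter> A"
    then obtain k where k: "k \<in> C" "z = k \<otimes> x" and "z \<in> A"
      unfolding r_coset_def by blast
    have "k = z \<otimes> inv x"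
      using k assms by (simp add: m_assoc subgroup.mem_carrier subset_iff)
    then have "k \<in> A"
      using \<open>z \<in> A\<close> assms by (simp add: subgroup.m_closed subgroup.m_inv_closed)
    then show "z \<in> (A \<inter> C) #> x"
      using k unfolding r_coset_def by blast
  qed
next
  show "(A \<inter> C) #> x \<subseteq> (C #> x) \<inter> A"
    using assms by (auto simp: r_coset_def subgroup.m_closed)
qed

lemma rel_cosets_Int_right: "rel_cosets G A (A \<inter> B) = rel_cosets G A B"
  unfolding rel_cosets_def by (simp add: Int_assoc[symmetric])

lemma (in group) rel_cosets_eq_singleton:
  assumes "subgroup A G" "A \<subseteq> B"
  shows "rel_cosets G A B = {A}"
proof -
  have "A #> a = A" if "a \<in> A" for a
    using subgroup.rcos_const[OF assms(1) is_group that] .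
  moreover have "\<one> \<in> A"
    using assms(1) by (rule subgroup.one_closed)
  ultimately show ?thesis
    using assms(2) unfolding rel_cosets_def by (auto simp: Int_absorb2)
qed

lemma rel_coset_subset:
  assumes "subgroup A G" "S \<in> rel_cosets G A B"
  shows "S \<subseteq> A"
  using assms unfolding rel_cosets_def r_coset_def by (auto intro: subgroup.m_closed)

lemma (in group) some_in_rel_coset:
  assumes "subgroup A G" "subgroup B G" "S \<in> rel_cosets G A B"
  shows "(SOME x. x \<in> S) \<in> S"
proof -
  obtain a where "a \<in> A" "S = (A \<inter> B) #> a"
    using assms(3) unfolding rel_cosets_def by blast
  then have "a \<in> S"
    using assms(1,2) by (simp add: rcos_self subgroups_Inter_pair subgroup.mem_carrier)
  then show ?thesis by (rule someI)
qed

lemma (in group) rel_cosets_subgroup_subset_image: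
  assumes "subgroup A G" "A \<subseteq> B" "B \<subseteq> carrier G"
  shows "rel_cosets G A C \<subseteq> (\<lambda>Y. Y \<inter> A) ` rel_cosets G B C"
proof
  fix S assume "S \<in> rel_cosets G A C"
  then obtain x where x: "x \<in> A" "S = (A \<inter> C) #> x"
    unfolding rel_cosets_def by blast
  have "((B \<inter> C) #> x) \<inter> A = (A \<inter> (B \<inter> C)) #> x"
    using assms x by (intro rcos_Int_subgroup) auto
  also have "A \<inter> (B \<inter> C) = A \<inter> C"
    using assms(2) by blast
  finally have "S = ((B \<inter> C) #> x) \<inter> A"
    using x by simp
  moreover have "(B \<inter> C) #> x \<in> rel_cosets G B C"
    using x assms(2) unfolding rel_cosets_def by blast
  ultimately show "S \<in> (\<lambda>Y. Y \<inter> A) ` rel_cosets G B C"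
    by blast
qed

lemma (in group) rel_cosets_tower_subset_image:
  assumes "subgroup A G" "subgroup B G" "subgroup C G"
  defines "rep \<equiv> \<lambda>S. SOME x. x \<in> S"
  shows "rel_cosets G A C \<subseteq>
    (\<lambda>(T, S). (A \<inter> C) #> (rep T \<otimes> rep S)) ` (rel_cosets G (A \<inter> B) C \<times> rel_cosets G A B)"
proof
  have AB: "subgroup (A \<inter> B) G" and ABC: "subgroup (A \<inter> B \<inter> C) G" and AC: "subgroup (A \<inter> C) G"
    using assms by (simp_all add: subgroups_Inter_pair)
  fix Z assume "Z \<in> rel_cosets G A C"
  then obtain a where a: "a \<in> A" "Z = (A \<inter> C) #> a"
    unfolding rel_cosets_def by blast
  define S where "S = (A \<inter> B) #> a"
  have S: "S \<in> rel_cosets G A B"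
    unfolding S_def rel_cosets_def using a by blast
  have rS: "rep S \<in> A"
    using some_in_rel_coset[OF assms(1,2) S] rel_coset_subset[OF assms(1) S]
    unfolding rep_def by blast
  obtain h where h: "h \<in> A \<inter> B" "a = h \<otimes> rep S"
    using rcos_some_decomp[OF AB, of a] a assms(1) unfolding rep_def S_def
    by (auto simp: subgroup.mem_carrier)
  define T where "T = (A \<inter> B \<inter> C) #> h"
  have T: "T \<in> rel_cosets G (A \<inter> B) C"
    unfolding T_def rel_cosets_def using h by blast
  have rT: "rep T \<in> A \<inter> B"
    using some_in_rel_coset[OF AB assms(3) T] rel_coset_subset[OF AB T]
    unfolding rep_def by blast
  obtain k where k: "k \<in> A \<inter> B \<inter> C" "h = k \<otimes> rep T"
    using rcos_some_decomp[OF ABC, of h] h AB unfolding rep_def T_def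
    by (auto simp: subgroup.mem_carrier)
  have carr: "k \<in> carrier G" "rep T \<in> carrier G" "rep S \<in> carrier G"
    using k rT rS assms by (auto simp: subgroup.mem_carrier)
  have "Z = (A \<inter> C) #> (k \<otimes> (rep T \<otimes> rep S))"
    using a h k carr by (simp add: m_assoc)
  also have "\<dots> = (A \<inter> C) #> (rep T \<otimes> rep S)"
    using k carr by (intro rcos_mult_absorb[OF AC]) auto
  finally show "Z \<in> (\<lambda>(T, S). (A \<inter> C) #> (rep T \<otimes> rep S)) `
      (rel_cosets G (A \<inter> B) C \<times> rel_cosets G A B)"
    using S T by force
qed

lemma (in group) finite_rel_cosets_Int:
  assumes "subgroup A G" "subgroup B G" "finite (rel_cosets G B C)"
  shows "finite (rel_cosets G (A \<inter> B) C)"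
  using assms subgroups_Inter_pair subgroup.subset
  by (metis finite_surj inf_le2 rel_cosets_subgroup_subset_image)

lemma (in group) rel_index_Int_le:
  assumes "subgroup A G" "subgroup B G" "finite (rel_cosets G B C)"
  shows "rel_index G (A \<inter> B) C \<le> rel_index G B C"
  using assms subgroups_Inter_pair subgroup.subset unfolding rel_index_def
  by (metis surj_card_le inf_le2 rel_cosets_subgroup_subset_image)

lemma (in group) finite_rel_cosets_trans:
  assumes "subgroup A G" "subgroup B G" "subgroup C G"
    and "finite (rel_cosets G A B)" "finite (rel_cosets G B C)"
  shows "finite (rel_cosets G A C)"
  by (rule finite_surj[OF _ rel_cosets_tower_subset_image[OF assms(1-3)]])
    (simp add: assms finite_rel_cosets_Int)

lemma (in group) rel_index_trans_le:
  assumes "subgroup A G" "subgroup B G" "subgroup C G"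
    and "finite (rel_cosets G A B)" "finite (rel_cosets G B C)"
  shows "rel_index G A C \<le> rel_index G A B * rel_index G B C"
proof -
  have "rel_index G A C \<le> card (rel_cosets G (A \<inter> B) C \<times> rel_cosets G A B)"
    unfolding rel_index_def
    by (rule surj_card_le[OF _ rel_cosets_tower_subset_image[OF assms(1-3)]])
      (simp add: assms finite_rel_cosets_Int)
  also have "\<dots> = rel_index G (A \<inter> B) C * rel_index G A B"
    by (simp add: card_cartesian_product rel_index_def)
  also have "\<dots> \<le> rel_index G B C * rel_index G A B"
    using assms by (simp add: rel_index_Int_le)
  finally show ?thesis
    by (simp add: mult.commute)
qed

lemma (in group) commensurable_trans:
  assumes "subgroup A G" "subgroup B G" "subgroup C G"
    and "commensurable G A B" "commensurable G B C"
  shows "commensurable G A C"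
  using assms finite_rel_cosets_trans unfolding commensurable_def by blast

lemma (in group) cweight_trans_le:
  assumes "subgroup A G" "subgroup B G" "subgroup C G"
    and "commensurable G A B" "commensurable G B C"
  shows "cweight G A C \<le> cweight G A B * cweight G B C"
proof -
  have "cweight G A C \<le> (rel_index G A B * rel_index G B C) * (rel_index G C B * rel_index G B A)"
    using assms unfolding cweight_def commensurable_def
    by (intro mult_le_mono rel_index_trans_le) auto
  then show ?thesis
    by (simp add: cweight_def mult_ac)
qed

lemma (in group) commensurable_Int_right_iff:
  assumes "subgroup A G" "subgroup B G"
  shows "commensurable G A (A \<inter> B) \<longleftrightarrow> finite (rel_cosets G A B)"
  using assms rel_cosets_eq_singleton[of "A \<inter> B" A] subgroups_Inter_pair
  by (simp add: commensurable_def rel_cosets_Int_right)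

lemma (in group) cweight_Int_right:
  assumes "subgroup A G" "subgroup B G"
  shows "cweight G A (A \<inter> B) = rel_index G A B"
  using assms rel_cosets_eq_singleton[of "A \<inter> B" A] subgroups_Inter_pair
  by (simp add: cweight_def rel_index_def rel_cosets_Int_right)

lemma commensurable_sym: "commensurable G A B \<longleftrightarrow> commensurable G B A"
  unfolding commensurable_def by blast

lemma cweight_sym: "cweight G A B = cweight G B A"
  unfolding cweight_def by simp

lemma comm_path_subgroup: "comm_path G p \<Longrightarrow> A \<in> set p \<Longrightarrow> subgroup A G"
  unfolding comm_path_def by blast

lemma comm_path_singleton [simp]: "comm_path G [A] \<longleftrightarrow> subgroup A G"
  unfolding comm_path_def by simp

lemma comm_path_Cons_Cons [simp]:
  "comm_path G (A # B # p) \<longleftrightarrow> subgroup A G \<and> commensurable G A B \<and> comm_path G (B # p)"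
  unfolding comm_path_def by (auto simp: less_Suc_eq_0_disj)

lemma path_length_singleton [simp]: "path_length G [A] = 1"
  unfolding path_length_def by simp

lemma path_length_Cons_Cons [simp]:
  "path_length G (A # B # p) = cweight G A B * path_length G (B # p)"
  unfolding path_length_def by (simp add: prod.lessThan_Suc_shift del: prod.lessThan_Suc)

lemma (in group) comm_path_commensurable_ends:
  "comm_path G p \<Longrightarrow> commensurable G (hd p) (last p)"
proof (induction p rule: induct_list012)
  case (2 A)
  then show ?case
    by (simp add: commensurable_def rel_cosets_eq_singleton)
next
  case (3 A B p)
  then show ?case
    using commensurable_trans[of A B "last (B # p)"] comm_path_subgroup[of G "B # p"] by simp
qed (simp add: comm_path_def)

lemma (in group) cweight_ends_le_path_length:
  "comm_path G p \<Longrightarrow> cweight G (hd p) (last p) \<le> path_length G p"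
proof (induction p rule: induct_list012)
  case (2 A)
  then show ?case
    by (simp add: cweight_def rel_index_def rel_cosets_eq_singleton)
next
  case (3 A B p)
  then have "cweight G A (last (B # p)) \<le> cweight G A B * cweight G B (last (B # p))"
    using comm_path_commensurable_ends[of "B # p"] comm_path_subgroup[of G "B # p"]
    by (intro cweight_trans_le) auto
  also have "\<dots> \<le> cweight G A B * path_length G (B # p)"
    using 3 by simp
  finally show ?case
    by simp
qed (simp add: comm_path_def)

lemma (in group) comm_geodesicI:
  assumes "comm_path G p" "path_length G p = cweight G (hd p) (last p)"
  shows "comm_geodesic G p"
  using assms cweight_ends_le_path_length unfolding comm_geodesic_def by metis

lemma comm_dist_geodesic:
  assumes "comm_geodesic G p"
  shows "comm_dist G (hd p) (last p) = path_length G p"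
  using assms unfolding comm_dist_def comm_geodesic_def
  by (intro cInf_eq_minimum) auto

theorem lemma6:
  assumes "group G" and "subgroup H G" and "subgroup K G" and "commensurable G H K"
  shows "comm_geodesic G [H, H \<inter> K, K]
       \<and> comm_dist G H K = cweight G H K
       \<and> comm_geodesic G [H, K]"
proof -
  interpret group G by (rule assms(1))
  have HK: "subgroup (H \<inter> K) G"
    using assms(2,3) by (rule subgroups_Inter_pair)
  have "finite (rel_cosets G H K)" "finite (rel_cosets G K H)"
    using assms(4) unfolding commensurable_def by auto
  then have "commensurable G H (H \<inter> K)" "commensurable G K (K \<inter> H)"
    by (simp_all add: commensurable_Int_right_iff assms(2,3))
  then have path3: "comm_path G [H, H \<inter> K, K]"
    using assms HK by (simp add: commensurable_sym[of G _ K] Int_commute)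
  have "cweight G (H \<inter> K) K = rel_index G K H"
    using cweight_Int_right[OF assms(3,2)] by (simp add: cweight_sym Int_commute)
  then have "path_length G [H, H \<inter> K, K] = cweight G H K"
    using cweight_Int_right[OF assms(2,3)] by (simp add: cweight_def)
  then have geo3: "comm_geodesic G [H, H \<inter> K, K]"
    using path3 by (intro comm_geodesicI) simp_all
  have geo2: "comm_geodesic G [H, K]"
    using assms by (intro comm_geodesicI) simp_all
  show ?thesis
    using geo2 geo3 comm_dist_geodesic[OF geo2] by simp
qed

end
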